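(* Let $S=(G,P,\Lambda,I)$ be a completely simple semigroup with non-singular sandwich matrix $P$. If the set $M=\{(x,y)\in S^2\mid x=(1,1_G,1)\text{ or }y=(1,1_G,1)\}$ is algebraic over $S$ in the language $\mathcal{L}_S$, then $S$ is an equational domain in the language $\mathcal{L}_S$.
   Context: Rees representation: a completely simple semigroup $S=(G,P,\Lambda,I)$ is given by a group $G$, index sets $\Lambda,I$ (each containing an element $1$), and a matrix $P=(p_{i\lambda})_{i\in I,\lambda\in\Lambda}$ over $G$ normalised so that $p_{1\lambda}=p_{i1}=1_G$; elements are triples $(\lambda,g,i)$ with product $(\lambda,g,i)(\mu,h,j)=(\lambda,gp_{i\mu}h,j)$ and inversion $(\lambda,g,i)^{-1}=(\lambda,p_{i\lambda}^{-1}g^{-1}p_{i\lambda}^{-1},i)$. $P$ is non-singular if it has no two equal rows and no two equal columns. The language $\mathcal{L}_S$ is $\{\cdot,{}^{-1}\}$ plus a constant for each element of $S$. An equation is an equality of two $\mathcal{L}_S$-terms; a system is a set of equations; a subset of $S^n$ is algebraic if it is the solution set of some system; $S$ is an equational domain (e.d.) if every finite union of algebraic sets is algebraic. *)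

theory Defs
  imports "HOL-Algebra.Group"
begin

text \<open>Elements are triples (lambda, g, i) with lambda in Lam, g in carrier G, i in I.
  The sandwich matrix is P :: 'i => 'l => 'a, entry P i lambda = p_{i lambda}.\<close>

definition rees_carrier :: "('a, 'b) monoid_scheme \<Rightarrow> 'l set \<Rightarrow> 'i set \<Rightarrow> ('l \<times> 'a \<times> 'i) set" where
  "rees_carrier G Lam I = Lam \<times> carrier G \<times> I"

definition rees_mult :: "('a, 'b) monoid_scheme \<Rightarrow> ('i \<Rightarrow> 'l \<Rightarrow> 'a)
    \<Rightarrow> ('l \<times> 'a \<times> 'i) \<Rightarrow> ('l \<times> 'a \<times> 'i) \<Rightarrow> ('l \<times> 'a \<times> 'i)" where
  "rees_mult G P x y =
     (case x of (lam, g, i) \<Rightarrow> case y of (mu, h, j) \<Rightarrow> (lam, g \<otimes>\<^bsub>G\<^esub> P i mu \<otimes>\<^bsub>G\<^esub> h, j))"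

definition rees_inv :: "('a, 'b) monoid_scheme \<Rightarrow> ('i \<Rightarrow> 'l \<Rightarrow> 'a)
    \<Rightarrow> ('l \<times> 'a \<times> 'i) \<Rightarrow> ('l \<times> 'a \<times> 'i)" where
  "rees_inv G P x =
     (case x of (lam, g, i) \<Rightarrow>
        (lam, inv\<^bsub>G\<^esub> (P i lam) \<otimes>\<^bsub>G\<^esub> inv\<^bsub>G\<^esub> g \<otimes>\<^bsub>G\<^esub> inv\<^bsub>G\<^esub> (P i lam), i))"

definition rees_data :: "('a, 'b) monoid_scheme \<Rightarrow> 'l set \<Rightarrow> 'i set \<Rightarrow> 'l \<Rightarrow> 'i
    \<Rightarrow> ('i \<Rightarrow> 'l \<Rightarrow> 'a) \<Rightarrow> bool" where
  "rees_data G Lam I lam1 i1 P \<longleftrightarrow>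
     group G \<and> lam1 \<in> Lam \<and> i1 \<in> I \<and>
     (\<forall>i\<in>I. \<forall>lam\<in>Lam. P i lam \<in> carrier G) \<and>
     (\<forall>lam\<in>Lam. P i1 lam = \<one>\<^bsub>G\<^esub>) \<and>
     (\<forall>i\<in>I. P i lam1 = \<one>\<^bsub>G\<^esub>)"

definition nonsingular :: "'l set \<Rightarrow> 'i set \<Rightarrow> ('i \<Rightarrow> 'l \<Rightarrow> 'a) \<Rightarrow> bool" where
  "nonsingular Lam I P \<longleftrightarrow>
     (\<forall>i\<in>I. \<forall>j\<in>I. i \<noteq> j \<longrightarrow> (\<exists>lam\<in>Lam. P i lam \<noteq> P j lam)) \<and>
     (\<forall>lam\<in>Lam. \<forall>mu\<in>Lam. lam \<noteq> mu \<longrightarrow> (\<exists>i\<in>I. P i lam \<noteq> P i mu))"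

datatype 'c trm = Var nat | Cst 'c | Mul "'c trm" "'c trm" | Inv "'c trm"

fun teval :: "('c \<Rightarrow> 'c \<Rightarrow> 'c) \<Rightarrow> ('c \<Rightarrow> 'c) \<Rightarrow> 'c list \<Rightarrow> 'c trm \<Rightarrow> 'c" where
  "teval m iv xs (Var k) = xs ! k"
| "teval m iv xs (Cst c) = c"
| "teval m iv xs (Mul t s) = m (teval m iv xs t) (teval m iv xs s)"
| "teval m iv xs (Inv t) = iv (teval m iv xs t)"

fun tvars :: "'c trm \<Rightarrow> nat set" where
  "tvars (Var k) = {k}"
| "tvars (Cst c) = {}"
| "tvars (Mul t s) = tvars t \<union> tvars s"
| "tvars (Inv t) = tvars t"

fun tconsts :: "'c trm \<Rightarrow> 'c set" where
  "tconsts (Var k) = {}"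
| "tconsts (Cst c) = {c}"
| "tconsts (Mul t s) = tconsts t \<union> tconsts s"
| "tconsts (Inv t) = tconsts t"

definition term_over :: "'c set \<Rightarrow> nat \<Rightarrow> 'c trm \<Rightarrow> bool" where
  "term_over S n t \<longleftrightarrow> tvars t \<subseteq> {..<n} \<and> tconsts t \<subseteq> S"

definition solset :: "'c set \<Rightarrow> ('c \<Rightarrow> 'c \<Rightarrow> 'c) \<Rightarrow> ('c \<Rightarrow> 'c) \<Rightarrow> nat
    \<Rightarrow> ('c trm \<times> 'c trm) set \<Rightarrow> 'c list set" where
  "solset S m iv n E = {xs. length xs = n \<and> set xs \<subseteq> S \<and>
      (\<forall>(t, s)\<in>E. teval m iv xs t = teval m iv xs s)}"

definition algebraic :: "'c set \<Rightarrow> ('c \<Rightarrow> 'c \<Rightarrow> 'c) \<Rightarrow> ('c \<Rightarrow> 'c) \<Rightarrow> nat \<Rightarrow> 'c list set \<Rightarrow> bool" where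
  "algebraic S m iv n A \<longleftrightarrow>
     (\<exists>E. (\<forall>(t, s)\<in>E. term_over S n t \<and> term_over S n s) \<and> A = solset S m iv n E)"

definition equational_domain :: "'c set \<Rightarrow> ('c \<Rightarrow> 'c \<Rightarrow> 'c) \<Rightarrow> ('c \<Rightarrow> 'c) \<Rightarrow> bool" where
  "equational_domain S m iv \<longleftrightarrow>
     (\<forall>n \<A>. finite \<A> \<and> \<A> \<noteq> {} \<and> (\<forall>A\<in>\<A>. algebraic S m iv n A) \<longrightarrow> algebraic S m iv n (\<Union>\<A>))"

end

theory Submission
  imports Defs
begin

text \<open>
  Write e = (1, 1_G, 1).  For a completely simple semigroup with non-singular
  sandwich matrix there is a family Ts of binary terms that \<^emph>\<open>separates\<close> points:
  u = v holds iff T(u, v) = e for every T in Ts.  Hence each equation t = s is equivalent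
  to the system of "pointed" equations T(t, s) = e, so every algebraic set is the zero set
  Z(U) = {x. u(x) = e for all u in U} of a set U of terms.  If the set M of pairs having
  a coordinate equal to e is the solution set of a system E_M(x, y), then
  Z(U1) \<union> Z(U2) is the solution set of all systems E_M(u1, u2) with u1 in U1, u2 in U2;
  by induction every finite union of algebraic sets is algebraic.
\<close>

fun subst :: "'c trm list \<Rightarrow> 'c trm \<Rightarrow> 'c trm" where
  "subst \<sigma> (Var k) = \<sigma> ! k"
| "subst \<sigma> (Cst c) = Cst c"
| "subst \<sigma> (Mul t s) = Mul (subst \<sigma> t) (subst \<sigma> s)"
| "subst \<sigma> (Inv t) = Inv (subst \<sigma> t)"

definition subst_sys :: "'c trm list \<Rightarrow> ('c trm \<times> 'c trm) set \<Rightarrow> ('c trm \<times> 'c trm) set" where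
  "subst_sys \<sigma> E = (\<lambda>(t, s). (subst \<sigma> t, subst \<sigma> s)) ` E"

definition system_over :: "'c set \<Rightarrow> nat \<Rightarrow> ('c trm \<times> 'c trm) set \<Rightarrow> bool" where
  "system_over S n E \<longleftrightarrow> (\<forall>(t, s)\<in>E. term_over S n t \<and> term_over S n s)"

lemma algebraic_iff_system_over:
  "algebraic S m iv n A \<longleftrightarrow> (\<exists>E. system_over S n E \<and> A = solset S m iv n E)"
  by (simp add: algebraic_def system_over_def)

lemma teval_subst:
  "tvars t \<subseteq> {..<length \<sigma>} \<Longrightarrow> teval m iv xs (subst \<sigma> t) = teval m iv (map (teval m iv xs) \<sigma>) t"
  by (induction t) auto

lemma term_over_subst:
  "term_over S (length \<sigma>) t \<Longrightarrow> \<forall>u\<in>set \<sigma>. term_over S n u \<Longrightarrow> term_over S n (subst \<sigma> t)"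
  by (induction t) (auto simp: term_over_def)

lemma system_over_subst_sys:
  "system_over S (length \<sigma>) E \<Longrightarrow> \<forall>u\<in>set \<sigma>. term_over S n u \<Longrightarrow> system_over S n (subst_sys \<sigma> E)"
  by (auto simp: system_over_def subst_sys_def intro: term_over_subst)

section \<open>Separating terms and equational domains\<close>

definition separating :: "'c set \<Rightarrow> ('c \<Rightarrow> 'c \<Rightarrow> 'c) \<Rightarrow> ('c \<Rightarrow> 'c) \<Rightarrow> 'c trm set \<Rightarrow> 'c \<Rightarrow> bool" where
  "separating S m iv Ts e \<longleftrightarrow> (\<forall>T\<in>Ts. term_over S 2 T) \<and>
     (\<forall>u\<in>S. \<forall>v\<in>S. u = v \<longleftrightarrow> (\<forall>T\<in>Ts. teval m iv [u, v] T = e))"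

definition zero_set :: "'c set \<Rightarrow> ('c \<Rightarrow> 'c \<Rightarrow> 'c) \<Rightarrow> ('c \<Rightarrow> 'c) \<Rightarrow> nat \<Rightarrow> 'c \<Rightarrow> 'c trm set \<Rightarrow> 'c list set" where
  "zero_set S m iv n e U = {xs. length xs = n \<and> set xs \<subseteq> S \<and> (\<forall>u\<in>U. teval m iv xs u = e)}"

context
  fixes S :: "'c set" and m :: "'c \<Rightarrow> 'c \<Rightarrow> 'c" and iv :: "'c \<Rightarrow> 'c"
  assumes mult_closed: "\<And>x y. x \<in> S \<Longrightarrow> y \<in> S \<Longrightarrow> m x y \<in> S"
    and inv_closed: "\<And>x. x \<in> S \<Longrightarrow> iv x \<in> S"
begin

lemma teval_closed:
  "set xs \<subseteq> S \<Longrightarrow> term_over S (length xs) t \<Longrightarrow> teval m iv xs t \<in> S"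
  by (induction t) (auto simp: term_over_def mult_closed inv_closed)

lemma solset_subst_sys:
  assumes E: "system_over S (length \<sigma>) E" and \<sigma>: "\<forall>u\<in>set \<sigma>. term_over S n u"
    and xs: "length xs = n" "set xs \<subseteq> S"
  shows "xs \<in> solset S m iv n (subst_sys \<sigma> E) \<longleftrightarrow>
         map (teval m iv xs) \<sigma> \<in> solset S m iv (length \<sigma>) E"
proof -
  have vals: "set (map (teval m iv xs) \<sigma>) \<subseteq> S"
    using \<sigma> xs by (auto intro!: teval_closed)
  have "teval m iv xs (subst \<sigma> t) = teval m iv (map (teval m iv xs) \<sigma>) t"
    if "term_over S (length \<sigma>) t" for t
    using that by (simp add: teval_subst term_over_def)
  then show ?thesis
    using E xs vals by (fastforce simp: solset_def subst_sys_def system_over_def)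
qed

text \<open>With separating terms, every algebraic set is a zero set: the equation t = s is
  replaced by the equations T(t, s) = e.\<close>
lemma algebraic_is_zero_set:
  assumes sep: "separating S m iv Ts e" and A: "algebraic S m iv n A"
  shows "\<exists>U. (\<forall>u\<in>U. term_over S n u) \<and> A = zero_set S m iv n e U"
proof -
  obtain E where E: "system_over S n E" and A_eq: "A = solset S m iv n E"
    using A by (auto simp: algebraic_iff_system_over)
  define U where "U = {subst [t, s] T | t s T. (t, s) \<in> E \<and> T \<in> Ts}"
  have over2: "term_over S (length [t, s]) T" if "T \<in> Ts" for t s :: "'c trm" and T
    using sep that by (simp add: separating_def numeral_2_eq_2)
  have "\<forall>u\<in>U. term_over S n u"
    using E over2 by (fastforce simp: U_def system_over_def intro: term_over_subst)
  moreover have "A = zero_set S m iv n e U"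
  proof (rule Set.set_eqI)
    fix xs
    have "xs \<in> A \<longleftrightarrow> xs \<in> zero_set S m iv n e U" if xs: "length xs = n" "set xs \<subseteq> S"
    proof -
      have "teval m iv xs t = teval m iv xs s \<longleftrightarrow> (\<forall>T\<in>Ts. teval m iv xs (subst [t, s] T) = e)"
        if "(t, s) \<in> E" for t s
      proof -
        have "teval m iv xs t \<in> S" "teval m iv xs s \<in> S"
          using E that xs by (auto simp: system_over_def intro!: teval_closed)
        moreover have "teval m iv xs (subst [t, s] T) = teval m iv [teval m iv xs t, teval m iv xs s] T"
          if "T \<in> Ts" for T
          using over2[OF that] by (simp add: teval_subst term_over_def)
        ultimately show ?thesis
          using sep by (simp add: separating_def)
      qed
      then have "(\<forall>(t, s)\<in>E. teval m iv xs t = teval m iv xs s) \<longleftrightarrow>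
                 (\<forall>(t, s)\<in>E. \<forall>T\<in>Ts. teval m iv xs (subst [t, s] T) = e)"
        by fast
      also have "\<dots> \<longleftrightarrow> (\<forall>u\<in>U. teval m iv xs u = e)"
        unfolding U_def by blast
      finally show ?thesis
        using xs by (simp add: A_eq solset_def zero_set_def)
    qed
    then show "xs \<in> A \<longleftrightarrow> xs \<in> zero_set S m iv n e U"
      by (auto simp: A_eq solset_def zero_set_def)
  qed
  ultimately show ?thesis by blast
qed

text \<open>If the set of pairs with a coordinate equal to e is the solution set of E_M(x, y),
  then a union of two zero sets is the solution set of the systems E_M(u1, u2).\<close>
lemma zero_set_union_algebraic:
  assumes EM: "system_over S 2 EM"
    and M: "{[x, y] | x y. x \<in> S \<and> y \<in> S \<and> (x = e \<or> y = e)} = solset S m iv 2 EM"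
    and U1: "\<forall>u\<in>U1. term_over S n u" and U2: "\<forall>u\<in>U2. term_over S n u"
  shows "algebraic S m iv n (zero_set S m iv n e U1 \<union> zero_set S m iv n e U2)"
proof -
  define E where "E = (\<Union>u1\<in>U1. \<Union>u2\<in>U2. subst_sys [u1, u2] EM)"
  have EM2: "system_over S (length [u1, u2]) EM" for u1 u2 :: "'c trm"
    using EM by (simp add: numeral_2_eq_2)
  have "system_over S n (subst_sys [u1, u2] EM)" if "u1 \<in> U1" "u2 \<in> U2" for u1 u2
    using that U1 U2 system_over_subst_sys[OF EM2] by simp
  then have "system_over S n E"
    by (fastforce simp: E_def system_over_def)
  moreover have "zero_set S m iv n e U1 \<union> zero_set S m iv n e U2 = solset S m iv n E"
  proof (rule Set.set_eqI)
    fix xs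
    have "xs \<in> solset S m iv n E \<longleftrightarrow> xs \<in> zero_set S m iv n e U1 \<union> zero_set S m iv n e U2"
      if xs: "length xs = n" "set xs \<subseteq> S"
    proof -
      let ?v = "teval m iv xs"
      have in_sub: "xs \<in> solset S m iv n (subst_sys [u1, u2] EM) \<longleftrightarrow> ?v u1 = e \<or> ?v u2 = e"
        if "u1 \<in> U1" "u2 \<in> U2" for u1 u2
      proof -
        have "?v u1 \<in> S" "?v u2 \<in> S"
          using that U1 U2 xs by (auto intro!: teval_closed)
        then have "[?v u1, ?v u2] \<in> solset S m iv 2 EM \<longleftrightarrow> ?v u1 = e \<or> ?v u2 = e"
          unfolding M[symmetric] by auto
        then show ?thesis
          using solset_subst_sys[OF EM2, of u1 u2 n xs] that U1 U2 xs by (simp add: numeral_2_eq_2)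
      qed
      have "xs \<in> solset S m iv n E \<longleftrightarrow>
            (\<forall>u1\<in>U1. \<forall>u2\<in>U2. xs \<in> solset S m iv n (subst_sys [u1, u2] EM))"
        using xs unfolding E_def solset_def by blast
      also have "\<dots> \<longleftrightarrow> (\<forall>u1\<in>U1. \<forall>u2\<in>U2. ?v u1 = e \<or> ?v u2 = e)"
        using in_sub by simp
      also have "\<dots> \<longleftrightarrow> xs \<in> zero_set S m iv n e U1 \<union> zero_set S m iv n e U2"
        using xs by (auto simp: zero_set_def)
      finally show ?thesis .
    qed
    then show "xs \<in> zero_set S m iv n e U1 \<union> zero_set S m iv n e U2 \<longleftrightarrow> xs \<in> solset S m iv n E"
      by (auto simp: solset_def zero_set_def)
  qed
  ultimately show ?thesis
    by (auto simp: algebraic_iff_system_over)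
qed

theorem equational_domain_if_separating:
  assumes sep: "separating S m iv Ts e"
    and M: "algebraic S m iv 2 {[x, y] | x y. x \<in> S \<and> y \<in> S \<and> (x = e \<or> y = e)}"
  shows "equational_domain S m iv"
proof -
  obtain EM where EM: "system_over S 2 EM"
    and M_eq: "{[x, y] | x y. x \<in> S \<and> y \<in> S \<and> (x = e \<or> y = e)} = solset S m iv 2 EM"
    using M by (auto simp: algebraic_iff_system_over)
  have union: "algebraic S m iv n (A1 \<union> A2)"
    if "algebraic S m iv n A1" "algebraic S m iv n A2" for n A1 A2
    using that algebraic_is_zero_set[OF sep] zero_set_union_algebraic[OF EM M_eq] by metis
  show ?thesis
    unfolding equational_domain_def
  proof (intro allI impI, elim conjE)
    fix n and \<A> :: "'c list set set"
    assume "finite \<A>" "\<A> \<noteq> {}" "\<forall>A\<in>\<A>. algebraic S m iv n A"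
    then show "algebraic S m iv n (\<Union>\<A>)"
      by (induction \<A> rule: finite_ne_induct) (auto intro: union)
  qed
qed

end

section \<open>Separating terms for Rees matrix semigroups\<close>

lemma (in group) mult_inv_eq_one_iff:
  "a \<in> carrier G \<Longrightarrow> b \<in> carrier G \<Longrightarrow> a \<otimes> inv b = \<one> \<longleftrightarrow> a = b"
  using inv_solve_right'[of "\<one>" a b] by simp

locale rees_matrix_semigroup =
  fixes G :: "('a, 'b) monoid_scheme" and Lam :: "'l set" and I :: "'i set"
    and lam1 :: 'l and i1 :: 'i and P :: "'i \<Rightarrow> 'l \<Rightarrow> 'a"
  assumes rees: "rees_data G Lam I lam1 i1 P"
begin

sublocale G: group G
  using rees by (simp add: rees_data_def)

abbreviation S where "S \<equiv> rees_carrier G Lam I"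
abbreviation mult where "mult \<equiv> rees_mult G P"
abbreviation rinv where "rinv \<equiv> rees_inv G P"

lemma P_closed: "i \<in> I \<Longrightarrow> l \<in> Lam \<Longrightarrow> P i l \<in> carrier G"
  and P_normal: "l \<in> Lam \<Longrightarrow> P i1 l = \<one>\<^bsub>G\<^esub>" "i \<in> I \<Longrightarrow> P i lam1 = \<one>\<^bsub>G\<^esub>"
  and base_indices: "lam1 \<in> Lam" "i1 \<in> I"
  using rees by (auto simp: rees_data_def)

lemma rees_mult_closed: "x \<in> S \<Longrightarrow> y \<in> S \<Longrightarrow> mult x y \<in> S"
  by (auto simp: rees_carrier_def rees_mult_def P_closed)

lemma rees_inv_closed: "x \<in> S \<Longrightarrow> rinv x \<in> S"
  by (auto simp: rees_carrier_def rees_inv_def P_closed)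

definition e :: "'l \<times> 'a \<times> 'i" where "e = (lam1, \<one>\<^bsub>G\<^esub>, i1)"

lemma e_in_S: "e \<in> S"
  by (simp add: e_def rees_carrier_def base_indices)

text \<open>The term e x (\<mu>, 1, 1) (e y (\<mu>, 1, 1))^-1 tests the column \<mu> of the middle
  components, the term (1, 1, j) x e ((1, 1, j) y e)^-1 tests the row j.\<close>
definition column_probe :: "'l \<Rightarrow> ('l \<times> 'a \<times> 'i) trm" where
  "column_probe \<mu> = Mul (Mul (Cst e) (Mul (Var 0) (Cst (\<mu>, \<one>\<^bsub>G\<^esub>, i1))))
                        (Inv (Mul (Cst e) (Mul (Var 1) (Cst (\<mu>, \<one>\<^bsub>G\<^esub>, i1)))))"

definition row_probe :: "'i \<Rightarrow> ('l \<times> 'a \<times> 'i) trm" where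
  "row_probe j = Mul (Mul (Cst (lam1, \<one>\<^bsub>G\<^esub>, j)) (Mul (Var 0) (Cst e)))
                     (Inv (Mul (Cst (lam1, \<one>\<^bsub>G\<^esub>, j)) (Mul (Var 1) (Cst e))))"

text \<open>Because row and column 1 of P are trivial, the probes compare g p_{i\<mu>} with
  h p_{i'\<mu>}, respectively p_{jl} g with p_{jl'} h.\<close>
lemma column_probe_eval:
  assumes "\<mu> \<in> Lam" "(l, g, i) \<in> S" "(l', h, i') \<in> S"
  shows "teval mult rinv [(l, g, i), (l', h, i')] (column_probe \<mu>) = e
     \<longleftrightarrow> g \<otimes>\<^bsub>G\<^esub> P i \<mu> = h \<otimes>\<^bsub>G\<^esub> P i' \<mu>"
  using assms base_indices
  by (simp add: column_probe_def e_def rees_carrier_def rees_mult_def rees_inv_def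
      P_normal P_closed G.mult_inv_eq_one_iff del: G.inv_mult_group)

lemma row_probe_eval:
  assumes "j \<in> I" "(l, g, i) \<in> S" "(l', h, i') \<in> S"
  shows "teval mult rinv [(l, g, i), (l', h, i')] (row_probe j) = e
     \<longleftrightarrow> P j l \<otimes>\<^bsub>G\<^esub> g = P j l' \<otimes>\<^bsub>G\<^esub> h"
  using assms base_indices
  by (simp add: row_probe_def e_def rees_carrier_def rees_mult_def rees_inv_def
      P_normal P_closed G.mult_inv_eq_one_iff del: G.inv_mult_group)

text \<open>For a non-singular matrix, an element is determined by the products of its group
  component with the rows and with the columns of P; the normalised entries in row and
  column 1 recover the group component, non-singularity recovers the indices.\<close>
lemma rees_eq_iff_probes:
  assumes ns: "nonsingular Lam I P" and u: "(l, g, i) \<in> S" and v: "(l', h, i') \<in> S"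
  shows "(l, g, i) = (l', h, i') \<longleftrightarrow>
    (\<forall>\<mu>\<in>Lam. g \<otimes>\<^bsub>G\<^esub> P i \<mu> = h \<otimes>\<^bsub>G\<^esub> P i' \<mu>) \<and> (\<forall>j\<in>I. P j l \<otimes>\<^bsub>G\<^esub> g = P j l' \<otimes>\<^bsub>G\<^esub> h)"
    (is "_ \<longleftrightarrow> ?cols \<and> ?rows")
proof
  assume cols_rows: "?cols \<and> ?rows"
  have carrier: "l \<in> Lam" "g \<in> carrier G" "i \<in> I" "l' \<in> Lam" "h \<in> carrier G" "i' \<in> I"
    using u v by (auto simp: rees_carrier_def)
  have g_eq: "g = h"
    using cols_rows base_indices carrier by (force simp: P_normal)
  have "P i \<mu> = P i' \<mu>" if "\<mu> \<in> Lam" for \<mu>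
    using cols_rows that carrier by (auto simp: g_eq P_closed G.Units_eq)
  then have "i = i'"
    using ns carrier unfolding nonsingular_def by blast
  moreover have "P j l = P j l'" if "j \<in> I" for j
    using cols_rows that carrier by (auto simp: g_eq P_closed)
  then have "l = l'"
    using ns carrier unfolding nonsingular_def by blast
  ultimately show "(l, g, i) = (l', h, i')"
    using g_eq by simp
qed simp

lemma probes_separating:
  assumes ns: "nonsingular Lam I P"
  shows "separating S mult rinv (column_probe ` Lam \<union> row_probe ` I) e"
proof -
  have terms: "\<forall>T\<in>column_probe ` Lam \<union> row_probe ` I. term_over S 2 T"
    using e_in_S base_indices
    by (auto simp: column_probe_def row_probe_def term_over_def rees_carrier_def)
  have separates: "\<forall>u\<in>S. \<forall>v\<in>S.
      u = v \<longleftrightarrow> (\<forall>T\<in>column_probe ` Lam \<union> row_probe ` I. teval mult rinv [u, v] T = e)"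
  proof (intro ballI)
    fix u v assume u: "u \<in> S" and v: "v \<in> S"
    obtain l g i l' h i' where uv: "u = (l, g, i)" "v = (l', h, i')"
      by (metis prod_cases3)
    have "(\<forall>T\<in>column_probe ` Lam \<union> row_probe ` I. teval mult rinv [u, v] T = e) \<longleftrightarrow>
          (\<forall>\<mu>\<in>Lam. teval mult rinv [u, v] (column_probe \<mu>) = e) \<and>
          (\<forall>j\<in>I. teval mult rinv [u, v] (row_probe j) = e)"
      by blast
    also have "\<dots> \<longleftrightarrow> (\<forall>\<mu>\<in>Lam. g \<otimes>\<^bsub>G\<^esub> P i \<mu> = h \<otimes>\<^bsub>G\<^esub> P i' \<mu>) \<and>
                      (\<forall>j\<in>I. P j l \<otimes>\<^bsub>G\<^esub> g = P j l' \<otimes>\<^bsub>G\<^esub> h)"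
      using u v unfolding uv by (simp add: column_probe_eval row_probe_eval)
    also have "\<dots> \<longleftrightarrow> u = v"
      using rees_eq_iff_probes[OF ns] u v unfolding uv by blast
    finally show "u = v \<longleftrightarrow> (\<forall>T\<in>column_probe ` Lam \<union> row_probe ` I. teval mult rinv [u, v] T = e)"
      by (rule sym)
  qed
  show ?thesis
    using terms separates unfolding separating_def by (rule conjI)
qed

end

theorem mainTheorem5:
  fixes G :: "('a, 'b) monoid_scheme" and Lam :: "'l set" and I :: "'i set"
    and lam1 :: 'l and i1 :: 'i and P :: "'i \<Rightarrow> 'l \<Rightarrow> 'a"
  assumes "rees_data G Lam I lam1 i1 P"
    and "nonsingular Lam I P"
    and "algebraic (rees_carrier G Lam I) (rees_mult G P) (rees_inv G P) 2
           {[x, y] | x y. x \<in> rees_carrier G Lam I \<and> y \<in> rees_carrier G Lam I \<and>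
              (x = (lam1, \<one>\<^bsub>G\<^esub>, i1) \<or> y = (lam1, \<one>\<^bsub>G\<^esub>, i1))}"
  shows "equational_domain (rees_carrier G Lam I) (rees_mult G P) (rees_inv G P)"
proof -
  interpret rees_matrix_semigroup G Lam I lam1 i1 P
    using assms(1) by unfold_locales
  show ?thesis
    using equational_domain_if_separating[OF rees_mult_closed rees_inv_closed
        probes_separating[OF assms(2)]] assms(3)
    by (simp add: e_def)
qed

end
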